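(* Let $r\in\mathbb{N}$ and $w,v\in\mathbb{YF}^r$. Then $$d_r(w,v)=\sum_{l=0}^{h(w,v)} d_1(s(w),s(v),l)\cdot r^{\#v-\#w-e(v[l])}.$$
   Context: Fix $r\in\mathbb{N}$. Words and statistics. Consider finite words over $\{1_1,\dots,1_r,2\}$. A letter $1_i$ is a one with digit value $1$; $2$ is a two with digit value $2$. $|x|$ is the sum of digit values, $\#x$ the number of letters, $e(x)$ the number of ones. The graph $\mathbb{YF}^r$. It is the graded graph on all finite words, graded by $|\cdot|$. From $x$ there is a downward edge to every word obtained by one of two operations: (i) delete the leftmost one; (ii) replace a $2$ lying left of the leftmost one (any $2$ if there are no ones) by $1_i$, with arbitrary $i$. $\mathbb{YF}=\mathbb{YF}^1$ (with $1:=1_1$). The map $s$ replaces every $1_i$ by $1$. Path counts. $d_r(x,y)$ is the number of downward paths $y=y_n\to\dots\to y_m=x$ with $|y_i|=i$. Suffix notation. $h(w,v)$ is the number of letters of the longest common suffix of $w,v$; $1_i\neq1_j$ for $i\ne j$. $x[l]$ is $x$ with its last $l$ letters deleted. The restricted path count $d_1(x,y,l)$. For $x,y\in\mathbb{YF}$ with common suffix $u$ of $l$ letters, $d_1(x,y,l)$ is the number of downward paths $y=y_nu\to\dots\to y_mu=x$ in $\mathbb{YF}$ with $|y_i|=i$ such that the words $y_i$ do not all end with the same letter. *)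

theory Defs
  imports Main
begin

text \<open>Letters: One i stands for the one 1_i (digit value 1), Two for the two (digit value 2).
  The alphabet of YF^r is {1_1,...,1_r,2}, i.e. One i with 1 \<le> i \<le> r, and Two.\<close>
datatype letter = One nat | Two

type_synonym word = "letter list"

definition YF :: "nat \<Rightarrow> word set" where
  "YF r = {x. \<forall>i. One i \<in> set x \<longrightarrow> 1 \<le> i \<and> i \<le> r}"

fun val :: "letter \<Rightarrow> nat" where
  "val (One i) = 1"
| "val Two = 2"

definition weight :: "word \<Rightarrow> nat" where
  "weight x = sum_list (map val x)"

fun is_one :: "letter \<Rightarrow> bool" where
  "is_one (One i) = True"
| "is_one Two = False"

definition e :: "word \<Rightarrow> nat" where
  "e x = length (filter is_one x)"

fun sl :: "letter \<Rightarrow> letter" where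
  "sl (One i) = One 1"
| "sl Two = Two"

definition s :: "word \<Rightarrow> word" where
  "s x = map sl x"

text \<open>Downward edges of YF^r: down r x y means there is an edge from x down to y.
  (i) delete the leftmost one; (ii) replace a 2 lying left of the leftmost one
  (i.e. with only 2s before it) by some 1_k, 1 \<le> k \<le> r.\<close>
definition down :: "nat \<Rightarrow> word \<Rightarrow> word \<Rightarrow> bool" where
  "down r x y \<longleftrightarrow>
     (\<exists>p i q. x = p @ One i # q \<and> (\<forall>a\<in>set p. a = Two) \<and> y = p @ q)
   \<or> (\<exists>p q k. x = p @ Two # q \<and> (\<forall>a\<in>set p. a = Two) \<and> 1 \<le> k \<and> k \<le> r
              \<and> y = p @ One k # q)"

definition is_path :: "nat \<Rightarrow> word \<Rightarrow> word \<Rightarrow> word list \<Rightarrow> bool" where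
  "is_path r x y ps \<longleftrightarrow> ps \<noteq> [] \<and> hd ps = y \<and> last ps = x
     \<and> (\<forall>j < length ps. weight (ps ! j) + j = weight y)
     \<and> (\<forall>j. Suc j < length ps \<longrightarrow> down r (ps ! j) (ps ! Suc j))"

definition d :: "nat \<Rightarrow> word \<Rightarrow> word \<Rightarrow> nat" where
  "d r x y = card {ps. is_path r x y ps}"

fun lcp :: "'a list \<Rightarrow> 'a list \<Rightarrow> nat" where
  "lcp (a # as) (b # bs) = (if a = b then Suc (lcp as bs) else 0)"
| "lcp _ _ = 0"

definition h :: "word \<Rightarrow> word \<Rightarrow> nat" where
  "h w v = lcp (rev w) (rev v)"

definition cut :: "word \<Rightarrow> nat \<Rightarrow> word" where
  "cut x l = take (length x - l) x"

text \<open>d_1(x,y,l): paths y = y_n u \<rightarrow> ... \<rightarrow> y_m u = x in YF (= YF^1), u the common suffix of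
  l letters (the last l letters of x), such that the words y_i do not all end with the same
  letter.\<close>
definition d1 :: "word \<Rightarrow> word \<Rightarrow> nat \<Rightarrow> nat" where
  "d1 x y l = card {ps. is_path 1 x y ps
      \<and> (\<forall>z\<in>set ps. \<exists>q. z = q @ drop (length x - l) x)
      \<and> \<not> (\<exists>c. \<forall>z\<in>set ps. \<exists>q. z = q @ [c] @ drop (length x - l) x)}"

end

theory Submission
  imports Defs "HOL-Library.Sublist"
begin

text \<open>Projecting letterwise by \<open>s\<close> maps paths of \<open>YF\<^sup>r\<close> onto paths of \<open>YF\<close>.
  Conversely, along a path of \<open>YF\<close> every deletion lifts uniquely, while every replacement of a
  2 by a one lifts in \<open>r\<close> ways, one for each index. If the words of the path in \<open>YF\<close> share a
  common suffix of exactly \<open>l\<close> letters, which is never touched, a lift starting at \<open>v\<close> can only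
  end at \<open>w\<close> if \<open>l \<le> h(w,v)\<close>, and the ones created and kept until the end must get the
  indices prescribed by \<open>w\<close>. The free indices are those of the ones created and deleted again:
  \<open>#v - #w\<close> ones are deleted in total, and \<open>e(v[l])\<close> of them already occur in \<open>v\<close>. So the path
  has \<open>r^(#v - #w - e(v[l]))\<close> lifts, and grouping the paths of \<open>YF\<close> by \<open>l\<close> gives the formula.\<close>

lemma weight_append [simp]: "weight (x @ y) = weight x + weight y"
  by (simp add: weight_def)

lemma weight_Cons [simp]: "weight (a # x) = val a + weight x"
  by (simp add: weight_def)

lemma e_Nil [simp]: "e [] = 0"
  by (simp add: e_def)

lemma e_append [simp]: "e (x @ y) = e x + e y"
  by (simp add: e_def)

lemma e_Cons_One [simp]: "e (One i # x) = Suc (e x)"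
  by (simp add: e_def)

lemma e_Cons_Two [simp]: "e (Two # x) = e x"
  by (simp add: e_def)

lemma e_twos: "\<forall>a\<in>set p. a = Two \<Longrightarrow> e p = 0"
  by (induction p) auto

lemma is_one_sl [simp]: "is_one (sl a) = is_one a"
  by (cases a) auto

lemma e_s [simp]: "e (s x) = e x"
  by (simp add: e_def s_def filter_map comp_def)

lemma s_Nil [simp]: "s [] = []"
  and s_append [simp]: "s (x @ y) = s x @ s y"
  and s_Cons [simp]: "s (a # x) = sl a # s x"
  and length_s [simp]: "length (s x) = length x"
  by (simp_all add: s_def)

lemma s_twos: "\<forall>a\<in>set p. a = Two \<Longrightarrow> s p = p"
  by (induction p) auto

lemma sl_eq_Two_iff [simp]: "sl a = Two \<longleftrightarrow> a = Two"
  by (cases a) auto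

lemma sl_eq_OneE: "sl a = One i \<Longrightarrow> (\<And>j. a = One j \<Longrightarrow> thesis) \<Longrightarrow> thesis"
  by (cases a) auto

lemma s_eq_twos: "s x = p \<Longrightarrow> \<forall>a\<in>set p. a = Two \<Longrightarrow> x = p"
  by (induction x arbitrary: p) auto

lemma s_eq_append_ConsE:
  assumes "s x = p @ b # q"
  obtains p' a q' where "x = p' @ a # q'" "s p' = p" "sl a = b" "s q' = q"
  using assms unfolding s_def by (auto simp: map_eq_append_conv)

lemma cut_s: "cut (s x) c = s (cut x c)"
  by (simp add: cut_def s_def take_map)

lemma cut_append: "c \<le> length y \<Longrightarrow> cut (x @ y) c = x @ cut y c"
  by (simp add: cut_def)

lemma cut_append_long: "length y \<le> c \<Longrightarrow> cut (x @ y) c = cut x (c - length y)"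
  by (simp add: cut_def)

lemma cut_Cons: "c \<le> length x \<Longrightarrow> cut (a # x) c = a # cut x c"
  by (simp add: cut_def Suc_diff_le)

lemma cut_append_Cons_length: "cut (x @ a # y) (length y) = x @ [a]"
  by (simp add: cut_def)

lemma e_cut_twos: "\<forall>a\<in>set p. a = Two \<Longrightarrow> e (cut p c) = 0"
  by (rule e_twos) (auto simp: cut_def dest: in_set_takeD)

section \<open>Common suffixes\<close>

lemma lcp_ge_iff: "n \<le> lcp xs ys \<longleftrightarrow> n \<le> length xs \<and> n \<le> length ys \<and> take n xs = take n ys"
proof (induction xs ys arbitrary: n rule: lcp.induct)
  case (1 a as b bs)
  then show ?case by (cases n) auto
qed auto

lemma h_ge_iff: "n \<le> h x y \<longleftrightarrow> n \<le> length x \<and> n \<le> length y \<and> take n (rev x) = take n (rev y)"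
  unfolding h_def lcp_ge_iff by simp

lemma h_le_length: "h x y \<le> length x" "h x y \<le> length y"
  using h_ge_iff[of "h x y" x y] by simp_all

lemma h_self: "h x x = length x"
  using h_ge_iff[of "length x" x x] h_le_length(1)[of x x] by simp

lemma h_same_suffix: "h (x @ u) (y @ u) = length u + h x y"
proof -
  have "lcp (zs @ xs) (zs @ ys) = length zs + lcp xs ys" for zs xs ys :: word
    by (induction zs) auto
  then show ?thesis by (simp add: h_def)
qed

lemma h_different_letter: "a \<noteq> b \<Longrightarrow> h (x @ a # u) (y @ b # u) = length u"
  using h_same_suffix[of "x @ [a]" u "y @ [b]"] by (simp add: h_def)

lemma h_delete_leftmost_one:
  assumes "\<forall>a\<in>set p. a = Two"
  shows "h (p @ One i # q) (p @ q) = length q"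
proof -
  have "lcp (One i # rev p) (rev p) = 0"
    using assms by (cases "rev p") (auto dest: arg_cong[where f = set])
  then show ?thesis using h_same_suffix[of "p @ [One i]" q p] by (simp add: h_def)
qed

lemma suffix_iff_take_rev: "suffix u x \<longleftrightarrow> length u \<le> length x \<and> take (length u) (rev x) = rev u"
proof
  assume "length u \<le> length x \<and> take (length u) (rev x) = rev u"
  then have "x = rev (drop (length u) (rev x)) @ u"
    by (metis append_take_drop_id rev_append rev_rev_ident)
  then show "suffix u x" by (rule suffixI)
qed (auto simp: suffix_def)

lemma suffix_iff_le_h: "suffix u y \<Longrightarrow> suffix u x \<longleftrightarrow> length u \<le> h x y"
  unfolding h_ge_iff suffix_iff_take_rev by auto

lemma le_h_append_iff: "c \<le> length y \<Longrightarrow> c \<le> h w (x @ y) \<longleftrightarrow> c \<le> h w y"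
  by (simp add: h_ge_iff)

lemma suffix_append_Cons: "suffix q (p @ a # q)"
  by (rule suffixI[of _ "p @ [a]"]) simp

lemma suffix_append_same_length_iff: "length u = length y \<Longrightarrow> suffix u (x @ y) \<longleftrightarrow> u = y"
  by (metis append_eq_append_conv suffix_def suffixI)

lemma le_h_twos_append_iff:
  assumes p: "\<forall>a\<in>set p. a = Two" and u: "length u \<le> m" and m: "m \<le> h (s w) (s (p @ u))"
  shows "m \<le> h w (p @ u) \<longleftrightarrow> suffix u w"
proof -
  let ?n = "length u"
  define T where "T = take m (rev w)"
  have lw: "m \<le> length w" and lpu: "m \<le> length (p @ u)"
    and "take m (rev (s w)) = take m (rev (s (p @ u)))"
    using m by (simp_all add: h_ge_iff)
  then have "s T = rev (s u) @ take (m - ?n) (rev p)"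
    using u by (simp add: T_def s_def take_map rev_map s_twos[OF p, unfolded s_def])
  then have "s (drop ?n T) = take (m - ?n) (rev p)"
    by (simp add: s_def drop_map[symmetric])
  then have dT: "drop ?n T = take (m - ?n) (rev p)"
    by (rule s_eq_twos) (use p in \<open>auto dest: in_set_takeD\<close>)
  have "m \<le> h w (p @ u) \<longleftrightarrow> T = rev u @ take (m - ?n) (rev p)"
    using lw lpu u by (simp add: h_ge_iff T_def)
  also have "\<dots> \<longleftrightarrow> take ?n T = rev u"
    using dT by (metis append_take_drop_id append_eq_conv_conj length_rev)
  also have "\<dots> \<longleftrightarrow> suffix u w"
    using u lw by (simp add: T_def suffix_iff_take_rev min_absorb1)
  finally show ?thesis .
qed

section \<open>Paths and their projection to \<open>YF\<close>\<close>

lemma down_cases [consumes 1, case_names delete replace]: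
  assumes "down r x y"
  obtains (delete) p i q where "\<forall>a\<in>set p. a = Two" "x = p @ One i # q" "y = p @ q"
  | (replace) p q k where "\<forall>a\<in>set p. a = Two" "x = p @ Two # q" "y = p @ One k # q" "1 \<le> k" "k \<le> r"
  using assms unfolding down_def by blast

lemma weight_down: "down r x y \<Longrightarrow> weight x = Suc (weight y)"
  by (auto simp: down_def)

lemma weight_successively_down:
  "successively (down r) ps \<Longrightarrow> j < length ps \<Longrightarrow> weight (ps ! j) + j = weight (hd ps)"
proof (induction ps arbitrary: j rule: induct_list012)
  case (3 x y zs)
  then show ?case by (cases j) (auto dest: weight_down)
qed auto

lemma is_path_iff:
  "is_path r x y ps \<longleftrightarrow> ps \<noteq> [] \<and> hd ps = y \<and> last ps = x \<and> successively (down r) ps"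
  unfolding is_path_def successively_conv_nth
  using weight_successively_down[unfolded successively_conv_nth]
  by (metis hd_conv_nth length_greater_0_conv)

lemma successively_down_bounded:
  "successively (down r) ps \<Longrightarrow> z \<in> set ps \<Longrightarrow>
     length z \<le> length (hd ps) \<and> set z \<subseteq> set (hd ps) \<union> One ` {1..r}"
proof (induction ps rule: induct_list012)
  case (3 x y zs)
  then have "down r x y" by simp
  then have "length y \<le> length x" "set y \<subseteq> set x \<union> One ` {1..r}"
    by (auto simp: down_def)
  moreover have "length z \<le> length y \<and> set z \<subseteq> set y \<union> One ` {1..r}" if "z \<in> set (y # zs)"
    using 3 that by simp
  ultimately show ?case
    using 3(4) by (cases "z = x") auto
qed auto

lemma finite_down: "finite {y. down r x y}"
proof -
  have "{y. down r x y} \<subseteq> {y. set y \<subseteq> set x \<union> One ` {1..r} \<and> length y \<le> length x}"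
    by (auto simp: down_def)
  moreover have "finite {y. set y \<subseteq> set x \<union> One ` {1..r} \<and> length y \<le> length x}"
    by (simp add: finite_lists_length_le)
  ultimately show ?thesis by (rule finite_subset)
qed

lemma finite_paths: "finite {ps. is_path r x y ps}"
proof -
  define W where "W = {z. set z \<subseteq> set y \<union> One ` {1..r} \<and> length z \<le> length y}"
  have "finite W"
    unfolding W_def by (simp add: finite_lists_length_le)
  moreover have "{ps. is_path r x y ps} \<subseteq> {ps. set ps \<subseteq> W \<and> length ps \<le> Suc (weight y)}"
  proof
    fix ps assume "ps \<in> {ps. is_path r x y ps}"
    then have path: "is_path r x y ps" by simp
    then have "set ps \<subseteq> W"
      unfolding is_path_iff W_def using successively_down_bounded by blast
    moreover have "weight (ps ! (length ps - 1)) + (length ps - 1) = weight y"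
      using path unfolding is_path_def by simp
    ultimately show "ps \<in> {ps. set ps \<subseteq> W \<and> length ps \<le> Suc (weight y)}" by simp
  qed
  ultimately show ?thesis
    using finite_lists_length_le finite_subset by blast
qed

lemma down_s: "down r x y \<Longrightarrow> down 1 (s x) (s y)"
proof (induction rule: down_cases)
  case (delete p i q)
  then show ?case
    unfolding down_def by (intro disjI1 exI[of _ p] exI[of _ 1] exI[of _ "s q"]) (simp add: s_twos)
next
  case (replace p q k)
  then show ?case
    unfolding down_def by (intro disjI2 exI[of _ p] exI[of _ "s q"] exI[of _ 1]) (simp add: s_twos)
qed

lemma is_path_s: "is_path r x y ps \<Longrightarrow> is_path 1 (s x) (s y) (map s ps)"
proof -
  have "successively (down r) ps \<Longrightarrow> successively (down 1) (map s ps)"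
    unfolding successively_map by (erule successively_mono) (rule down_s)
  then show "is_path r x y ps \<Longrightarrow> is_path 1 (s x) (s y) (map s ps)"
    by (auto simp: is_path_iff hd_map last_map)
qed

lemma down_1_s_cases [consumes 1, case_names delete replace]:
  assumes "down 1 (s v) y"
  obtains (delete) p j q where "\<forall>a\<in>set p. a = Two" "v = p @ One j # q" "y = s (p @ q)"
  | (replace) p q where "\<forall>a\<in>set p. a = Two" "v = p @ Two # q" "y = s (p @ One 1 # q)"
  using assms
proof (cases rule: down_cases)
  case (delete p i q)
  then obtain p' a q' where v: "v = p' @ a # q'" "s p' = p" "sl a = One i" "s q' = q"
    by (auto elim: s_eq_append_ConsE)
  obtain j where "a = One j" using v(3) by (rule sl_eq_OneE)
  moreover have "p' = p" using v(2) delete(1) by (rule s_eq_twos)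
  ultimately show thesis
    using that(1)[of p j q'] v delete by (simp add: s_twos)
next
  case (replace p q k)
  then obtain p' a q' where v: "v = p' @ a # q'" "s p' = p" "sl a = Two" "s q' = q"
    by (auto elim: s_eq_append_ConsE)
  have "p' = p" using v(2) replace(1) by (rule s_eq_twos)
  then show thesis
    using that(2)[of p q'] v replace by (simp add: s_twos)
qed

lemma leading_one_unique:
  assumes "p @ One i # q = p' @ One i' # q'" "\<forall>a\<in>set p. a = Two" "\<forall>a\<in>set p'. a = Two"
  shows "p = p' \<and> i = i' \<and> q = q'"
  using assms
proof (induction p arbitrary: p')
  case Nil
  then show ?case by (cases p') auto
next
  case (Cons a p)
  then show ?case by (cases p') auto
qed

lemma lifted_successors_delete:
  assumes p: "\<forall>a\<in>set p. a = Two"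
  shows "{v'. down r (p @ One j # q) v' \<and> s v' = s (p @ q)} = {p @ q}"
proof (intro equalityI subsetI)
  fix v' assume "v' \<in> {v'. down r (p @ One j # q) v' \<and> s v' = s (p @ q)}"
  then have step: "down r (p @ One j # q) v'" and sv': "s v' = s (p @ q)" by auto
  from step show "v' \<in> {p @ q}"
  proof (cases rule: down_cases)
    case (delete p' i q')
    then have "p' = p \<and> q' = q" using leading_one_unique[of p j q p' i q'] p by simp
    then show ?thesis using delete(3) by simp
  next
    case (replace p' q' k)
    then have "length v' = length (p @ One j # q)" by simp
    moreover have "length v' = length (p @ q)" using arg_cong[OF sv', of length] by simp
    ultimately show ?thesis by simp
  qed
next
  fix v' assume "v' \<in> {p @ q}"
  then show "v' \<in> {v'. down r (p @ One j # q) v' \<and> s v' = s (p @ q)}"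
    using p unfolding down_def by blast
qed

lemma lifted_successors_replace:
  assumes p: "\<forall>a\<in>set p. a = Two"
  shows "{v'. down r (p @ Two # q) v' \<and> s v' = s (p @ One 1 # q)} = (\<lambda>k. p @ One k # q) ` {1..r}"
proof (intro equalityI subsetI)
  fix v' assume "v' \<in> {v'. down r (p @ Two # q) v' \<and> s v' = s (p @ One 1 # q)}"
  then have step: "down r (p @ Two # q) v'" and sv': "s v' = s (p @ One 1 # q)" by auto
  from step show "v' \<in> (\<lambda>k. p @ One k # q) ` {1..r}"
  proof (cases rule: down_cases)
    case (delete p' i q')
    then have "Suc (length v') = length (p @ Two # q)" by simp
    moreover have "length v' = length (p @ One 1 # q)" using arg_cong[OF sv', of length] by simp
    ultimately show ?thesis by simp
  next
    case (replace p' q' k)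
    then have "p' @ One 1 # s q' = p @ One 1 # s q"
      using sv' p by (simp add: s_twos)
    then have "p' = p" using leading_one_unique replace(1) p by blast
    with replace show ?thesis by auto
  qed
next
  fix v' assume "v' \<in> (\<lambda>k. p @ One k # q) ` {1..r}"
  then obtain k where "v' = p @ One k # q" "1 \<le> k" "k \<le> r" by auto
  then show "v' \<in> {v'. down r (p @ Two # q) v' \<and> s v' = s (p @ One 1 # q)}"
    using p unfolding down_def by (simp add: s_twos) blast
qed

fun common_suffix_length :: "word list \<Rightarrow> nat" where
  "common_suffix_length [] = 0"
| "common_suffix_length [x] = length x"
| "common_suffix_length (x # y # ps) = min (h x y) (common_suffix_length (y # ps))"

lemma suffix_all_iff_le_common_suffix_length:
  "ps \<noteq> [] \<Longrightarrow> suffix u (last ps) \<Longrightarrow>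
    (\<forall>z\<in>set ps. suffix u z) \<longleftrightarrow> length u \<le> common_suffix_length ps"
proof (induction ps rule: common_suffix_length.induct)
  case (2 x)
  then show ?case by (auto dest: suffix_length_le)
next
  case (3 x y ps)
  then have IH: "(\<forall>z\<in>set (y # ps). suffix u z) \<longleftrightarrow> length u \<le> common_suffix_length (y # ps)"
    by simp
  show ?case
  proof
    assume "\<forall>z\<in>set (x # y # ps). suffix u z"
    with IH suffix_iff_le_h[of u y x] show "length u \<le> common_suffix_length (x # y # ps)"
      by simp
  next
    assume "length u \<le> common_suffix_length (x # y # ps)"
    with IH suffix_iff_le_h[of u y x] show "\<forall>z\<in>set (x # y # ps). suffix u z"
      by simp
  qed
qed simp

lemma common_suffix_length_le_last: "ps \<noteq> [] \<Longrightarrow> common_suffix_length ps \<le> length (last ps)"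
  by (induction ps rule: common_suffix_length.induct) auto

lemma suffix_all_drop_iff_le_common_suffix_length:
  assumes "ps \<noteq> []" "n \<le> length (last ps)"
  shows "(\<forall>z\<in>set ps. suffix (drop (length (last ps) - n) (last ps)) z) \<longleftrightarrow> n \<le> common_suffix_length ps"
  using suffix_all_iff_le_common_suffix_length[OF assms(1) suffix_drop] assms(2) by simp

lemma common_suffix_length_le_h:
  assumes "ps \<noteq> []"
  shows "common_suffix_length ps \<le> h (last ps) (hd ps)"
proof -
  let ?c = "common_suffix_length ps"
  let ?u = "drop (length (last ps) - ?c) (last ps)"
  have "\<forall>z\<in>set ps. suffix ?u z"
    using suffix_all_drop_iff_le_common_suffix_length[OF assms common_suffix_length_le_last[OF assms]]
    by simp
  then have "suffix ?u (hd ps)"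
    using assms by simp
  then have "length ?u \<le> h (last ps) (hd ps)"
    using suffix_iff_le_h suffix_drop by blast
  then show ?thesis
    using common_suffix_length_le_last[OF assms] by simp
qed

lemma length_add_e_cut_down_le:
  assumes "down r x y" "c \<le> h x y"
  shows "length y + e (cut x c) \<le> length x + e (cut y c)"
  using assms(1)
proof (cases rule: down_cases)
  case (delete p i q)
  then have "c \<le> length q" using assms(2) h_delete_leftmost_one by simp
  then show ?thesis using delete by (simp add: cut_append cut_Cons)
next
  case (replace p q k)
  then have "c \<le> length q" using assms(2) h_different_letter[of Two "One k" p q p] by simp
  then show ?thesis using replace by (simp add: cut_append cut_Cons)
qed

lemma length_add_e_cut_h_down:
  assumes "down r x y"
  shows "length y + e (cut x (h x y)) = length x"
  using assms
proof (cases rule: down_cases)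
  case (delete p i q)
  then show ?thesis by (simp add: h_delete_leftmost_one cut_append_Cons_length e_twos)
next
  case (replace p q k)
  then show ?thesis by (simp add: h_different_letter cut_append_Cons_length e_twos)
qed

text \<open>Every one of the top word outside the common suffix gets deleted along the path.\<close>

lemma length_add_e_cut_common_suffix_length_le:
  "successively (down r) P \<Longrightarrow> P \<noteq> [] \<Longrightarrow>
    length (last P) + e (cut (hd P) (common_suffix_length P)) \<le> length (hd P)"
proof (induction P rule: induct_list012)
  case (2 x)
  then show ?case by (simp add: cut_def)
next
  case (3 x y zs)
  let ?c = "common_suffix_length (y # zs)"
  have step: "down r x y" and IH: "length (last (y # zs)) + e (cut y ?c) \<le> length y"
    using 3 by simp_all
  show ?case
  proof (cases "?c \<le> h x y")
    case True
    then show ?thesis using IH length_add_e_cut_down_le[OF step True] by simp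
  next
    case False
    then show ?thesis using IH length_add_e_cut_h_down[OF step] by simp
  qed
qed simp

section \<open>Counting lifts\<close>

definition lifts :: "nat \<Rightarrow> word \<Rightarrow> word \<Rightarrow> word list \<Rightarrow> word list set" where
  "lifts r w v P = {ps. is_path r w v ps \<and> map s ps = P}"

lemma finite_lifts: "finite (lifts r w v P)"
  unfolding lifts_def by (rule finite_subset[OF _ finite_paths[of r w v]]) blast

lemma lifts_singleton: "lifts r w v [x] = (if x = s v \<and> w = v then {[v]} else {})"
proof -
  have "ps \<in> lifts r w v [x] \<longleftrightarrow> ps = [v] \<and> x = s v \<and> w = v" for ps
    by (cases ps) (auto simp: lifts_def is_path_iff)
  then show ?thesis by auto
qed

lemma lifts_Cons:
  "lifts r w v (s v # y # P) = (\<Union>v'\<in>{v'. down r v v' \<and> s v' = y}. (#) v ` lifts r w v' (y # P))"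
proof (intro equalityI subsetI)
  fix ps assume "ps \<in> lifts r w v (s v # y # P)"
  then have path: "is_path r w v ps" and proj: "map s ps = s v # y # P"
    by (simp_all add: lifts_def)
  from proj obtain a v' ps' where ps: "ps = a # v' # ps'" and "s v' = y" "map s ps' = P"
    unfolding map_eq_Cons_conv by blast
  moreover have "a = v" "down r v v'" "is_path r w v' (v' # ps')"
    using path unfolding ps is_path_iff by auto
  ultimately show "ps \<in> (\<Union>v'\<in>{v'. down r v v' \<and> s v' = y}. (#) v ` lifts r w v' (y # P))"
    unfolding lifts_def by auto
next
  fix ps assume "ps \<in> (\<Union>v'\<in>{v'. down r v v' \<and> s v' = y}. (#) v ` lifts r w v' (y # P))"
  then obtain v' ps' where v': "down r v v'" "s v' = y" and ps: "ps = v # ps'"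
    and lift: "ps' \<in> lifts r w v' (y # P)"
    by blast
  then obtain ps'' where "ps' = v' # ps''"
    unfolding lifts_def is_path_iff by (cases ps') auto
  with v' ps lift show "ps \<in> lifts r w v (s v # y # P)"
    unfolding lifts_def is_path_iff by simp
qed

lemma card_lifts_Cons:
  "card (lifts r w v (s v # y # P)) = (\<Sum>v' | down r v v' \<and> s v' = y. card (lifts r w v' (y # P)))"
proof -
  have "finite {v'. down r v v' \<and> s v' = y}"
    by (rule finite_subset[OF _ finite_down[of r v]]) blast
  moreover have "lifts r w v1 (y # P) \<inter> lifts r w v2 (y # P) = {}" if "v1 \<noteq> v2" for v1 v2
    using that by (auto simp: lifts_def is_path_iff)
  then have "(#) v ` lifts r w v1 (y # P) \<inter> (#) v ` lifts r w v2 (y # P) = {}" if "v1 \<noteq> v2" for v1 v2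
    using that by blast
  ultimately have "card (lifts r w v (s v # y # P))
      = (\<Sum>v' | down r v v' \<and> s v' = y. card ((#) v ` lifts r w v' (y # P)))"
    unfolding lifts_Cons by (intro card_UN_disjoint) (simp_all add: finite_lifts)
  then show ?thesis by (simp add: card_image)
qed

lemma card_paths_eq_sum_card_lifts:
  "card {ps. is_path r w v ps} = (\<Sum>P | is_path 1 (s w) (s v) P. card (lifts r w v P))"
proof -
  have "{ps. is_path r w v ps} = (\<Union>P\<in>{P. is_path 1 (s w) (s v) P}. lifts r w v P)"
    using is_path_s unfolding lifts_def by blast
  moreover have "lifts r w v P1 \<inter> lifts r w v P2 = {}" if "P1 \<noteq> P2" for P1 P2
    using that by (auto simp: lifts_def)
  ultimately show ?thesis
    by (simp only:) (intro card_UN_disjoint finite_paths ballI finite_lifts impI)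
qed

definition lift_count :: "nat \<Rightarrow> word \<Rightarrow> word \<Rightarrow> nat \<Rightarrow> nat" where
  "lift_count r w v c = (if c \<le> h w v then r ^ (length v - length w - e (cut v c)) else 0)"

lemma lift_count_delete_step:
  assumes p: "\<forall>a\<in>set p. a = Two" and c: "c \<le> h (s w) (s (p @ q))"
  shows "lift_count r w (p @ q) c = lift_count r w (p @ One j # q) (min (length q) c)"
proof (cases "c \<le> length q")
  case True
  have "c \<le> h w (p @ q) \<longleftrightarrow> c \<le> h w (p @ One j # q)"
    using True le_h_append_iff[of c q w p] le_h_append_iff[of c q w "p @ [One j]"] by simp
  then show ?thesis
    using True p by (simp add: lift_count_def cut_append cut_Cons e_twos)
next
  case False
  have "c \<le> h w (p @ q) \<longleftrightarrow> suffix q w"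
    using False c le_h_twos_append_iff[OF p] by simp
  also have "\<dots> \<longleftrightarrow> length q \<le> h w (p @ One j # q)"
    using suffix_iff_le_h[OF suffix_append_Cons] .
  finally show ?thesis
    using False p by (simp add: lift_count_def cut_append_long cut_append_Cons_length e_cut_twos e_twos)
qed

lemma index_of_lifted_one:
  assumes p: "\<forall>a\<in>set p. a = Two" and w: "w \<in> YF r"
    and q: "length q < c" and c: "c \<le> h (s w) (s (p @ One 1 # q))"
  obtains k0 where "k0 \<in> {1..r}" and "\<And>k. c \<le> h w (p @ One k # q) \<longleftrightarrow> k = k0 \<and> suffix q w"
proof -
  have "suffix (One 1 # s q) (s (p @ One 1 # q))"
    using p by (simp add: s_twos suffix_appendI)
  then have "suffix (One 1 # s q) (s w)"
    using c q suffix_iff_le_h by fastforce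
  then obtain w0 where "s w = w0 @ One 1 # s q"
    by (auto simp: suffix_def)
  then obtain w1 a q' where w1: "w = w1 @ a # q'" "sl a = One 1" "s q' = s q"
    by (rule s_eq_append_ConsE)
  then obtain k0 where a: "a = One k0"
    by (auto elim: sl_eq_OneE)
  have lq': "length q' = length q"
    using arg_cong[OF w1(3), of length] by simp
  have "c \<le> h w (p @ One k # q) \<longleftrightarrow> k = k0 \<and> suffix q w" for k
  proof -
    have "c \<le> h w (p @ One k # q) \<longleftrightarrow> suffix (One k # q) w"
      using le_h_twos_append_iff[OF p, of "One k # q" c w] q c p by (simp add: s_twos)
    also have "\<dots> \<longleftrightarrow> k = k0 \<and> q' = q"
      using w1 a lq' suffix_append_same_length_iff[of "One k # q" "One k0 # q'" w1] by auto
    also have "q' = q \<longleftrightarrow> suffix q w"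
      using w1 lq' suffix_append_same_length_iff[of q q' "w1 @ [a]"] by auto
    finally show ?thesis .
  qed
  moreover have "k0 \<in> {1..r}"
    using w w1 a by (auto simp: YF_def)
  ultimately show thesis
    using that by blast
qed

lemma lift_count_replace_step:
  assumes p: "\<forall>a\<in>set p. a = Two" and c: "c \<le> h (s w) (s (p @ One 1 # q))" and w: "w \<in> YF r"
    and bound: "length w + e (cut (p @ One 1 # q) c) \<le> length (p @ One 1 # q)"
  shows "(\<Sum>k = 1..r. lift_count r w (p @ One k # q) c) = lift_count r w (p @ Two # q) (min (length q) c)"
proof (cases "c \<le> length q")
  case True
  let ?N = "length (p @ Two # q) - length w"
  let ?X = "e (cut q c)"
  have "lift_count r w (p @ One k # q) c = (if c \<le> h w q then r ^ (?N - Suc ?X) else 0)" for k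
    using True le_h_append_iff[of c q w "p @ [One k]"] p
    by (simp add: lift_count_def cut_append cut_Cons e_twos)
  then have "(\<Sum>k = 1..r. lift_count r w (p @ One k # q) c) = (if c \<le> h w q then r * r ^ (?N - Suc ?X) else 0)"
    by simp
  \<comment> \<open>\<open>bound\<close> gives \<open>Suc ?X \<le> ?N\<close>, so the truncated subtraction does no harm here.\<close>
  also have "\<dots> = (if c \<le> h w q then r ^ (?N - ?X) else 0)"
    using bound True p by (simp add: cut_append cut_Cons e_twos Suc_diff_le flip: power_Suc)
  also have "\<dots> = lift_count r w (p @ Two # q) (min (length q) c)"
    using True le_h_append_iff[of c q w "p @ [Two]"] p
    by (simp add: lift_count_def cut_append cut_Cons e_twos)
  finally show ?thesis .
next
  case False
  obtain k0 where k0: "k0 \<in> {1..r}" and iff: "\<And>k. c \<le> h w (p @ One k # q) \<longleftrightarrow> k = k0 \<and> suffix q w"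
    using index_of_lifted_one[OF p w _ c] False by auto
  have "lift_count r w (p @ One k # q) c
      = (if k = k0 then (if suffix q w then r ^ (length (p @ Two # q) - length w) else 0) else 0)" for k
    using iff[of k] False p by (simp add: lift_count_def cut_append_long e_cut_twos)
  then have "(\<Sum>k = 1..r. lift_count r w (p @ One k # q) c)
      = (if suffix q w then r ^ (length (p @ Two # q) - length w) else 0)"
    using k0 by simp
  also have "\<dots> = lift_count r w (p @ Two # q) (min (length q) c)"
    using suffix_iff_le_h[OF suffix_append_Cons[of q p Two], of w] False p
    by (simp add: lift_count_def cut_append_Cons_length e_twos)
  finally show ?thesis .
qed

lemma sum_lift_count_successors:
  assumes step: "down 1 (s v) y" and c: "c \<le> h (s w) y" and w: "w \<in> YF r"
    and bound: "length w + e (cut y c) \<le> length y"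
  shows "(\<Sum>v' | down r v v' \<and> s v' = y. lift_count r w v' c) = lift_count r w v (min (h (s v) y) c)"
  using step
proof (cases rule: down_1_s_cases)
  case (delete p j q)
  have "h (s v) y = length q"
    using delete h_delete_leftmost_one[of p 1 "s q"] by (simp add: s_twos)
  then show ?thesis
    using delete c lifted_successors_delete[of p r j q] lift_count_delete_step[of p c w q r j] by simp
next
  case (replace p q)
  have "h (s v) y = length q"
    using replace h_different_letter[of Two "One 1" p "s q" p] by (simp add: s_twos)
  moreover have "(\<Sum>v' | down r v v' \<and> s v' = y. lift_count r w v' c)
      = (\<Sum>k = 1..r. lift_count r w (p @ One k # q) c)"
    using replace lifted_successors_replace[of p r q] by (simp add: sum.reindex inj_on_def)
  moreover have "e (cut y c) = e (cut (p @ One 1 # q) c)" "length y = length (p @ One 1 # q)"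
    using replace(3) by (simp_all only: cut_s e_s length_s)
  then have "length w + e (cut (p @ One 1 # q) c) \<le> length (p @ One 1 # q)"
    using bound by simp
  ultimately show ?thesis
    using lift_count_replace_step[OF replace(1) _ w] c replace by simp
qed

lemma card_lifts:
  assumes "is_path 1 (s w) (s v) P" and w: "w \<in> YF r"
  shows "card (lifts r w v P) = lift_count r w v (common_suffix_length P)"
  using assms(1)
proof (induction P arbitrary: v rule: induct_list012)
  case 1
  then show ?case by (simp add: is_path_iff)
next
  case (2 x)
  then have x: "x = s v" "x = s w" by (auto simp: is_path_iff)
  then have "length v = length w" by (metis length_s)
  then have "length v \<le> h w v \<longleftrightarrow> w = v" by (auto simp: h_ge_iff h_self)
  then show ?case using x by (auto simp: lifts_singleton lift_count_def cut_def)
next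
  case (3 x y ps)
  let ?c = "common_suffix_length (y # ps)"
  have x: "x = s v" and step: "down 1 (s v) y" and tail: "is_path 1 (s w) y (y # ps)"
    using "3.prems" by (auto simp: is_path_iff)
  have IH: "card (lifts r w v' (y # ps)) = lift_count r w v' ?c" if "s v' = y" for v'
    using "3.IH"(2) tail that by blast
  have "card (lifts r w v (x # y # ps)) = (\<Sum>v' | down r v v' \<and> s v' = y. card (lifts r w v' (y # ps)))"
    using x card_lifts_Cons by simp
  also have "\<dots> = (\<Sum>v' | down r v v' \<and> s v' = y. lift_count r w v' ?c)"
    using IH by (intro sum.cong) auto
  also have "\<dots> = lift_count r w v (min (h (s v) y) ?c)"
  proof (rule sum_lift_count_successors[OF step _ w])
    show "?c \<le> h (s w) y"
      using common_suffix_length_le_h[of "y # ps"] tail by (simp add: is_path_iff)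
    show "length w + e (cut y ?c) \<le> length y"
      using length_add_e_cut_common_suffix_length_le[of 1 "y # ps"] tail by (simp add: is_path_iff)
  qed
  finally show ?case using x by simp
qed

lemma ex_suffix_Cons_all_iff_le_common_suffix_length:
  assumes ne: "ps \<noteq> []"
  shows "(\<exists>c. \<forall>z\<in>set ps. suffix (c # drop (length (last ps) - l) (last ps)) z)
    \<longleftrightarrow> Suc l \<le> common_suffix_length ps"
proof
  let ?x = "last ps"
  assume "\<exists>c. \<forall>z\<in>set ps. suffix (c # drop (length ?x - l) ?x) z"
  then obtain c where all: "\<forall>z\<in>set ps. suffix (c # drop (length ?x - l) ?x) z" ..
  then have sfx: "suffix (c # drop (length ?x - l) ?x) ?x"
    using ne by simp
  have "length (c # drop (length ?x - l) ?x) \<le> common_suffix_length ps"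
    using suffix_all_iff_le_common_suffix_length[OF ne sfx] all by simp
  moreover have "length (c # drop (length ?x - l) ?x) \<le> length ?x"
    using sfx by (rule suffix_length_le)
  ultimately show "Suc l \<le> common_suffix_length ps" by simp
next
  let ?x = "last ps"
  assume Suc_l: "Suc l \<le> common_suffix_length ps"
  moreover have le_x: "common_suffix_length ps \<le> length ?x"
    using common_suffix_length_le_last[OF ne] .
  ultimately have "\<forall>z\<in>set ps. suffix (drop (length ?x - Suc l) ?x) z"
    using suffix_all_drop_iff_le_common_suffix_length[OF ne, of "Suc l"] by simp
  moreover have "drop (length ?x - Suc l) ?x = ?x ! (length ?x - Suc l) # drop (length ?x - l) ?x"
    using Suc_l le_x Cons_nth_drop_Suc[of "length ?x - Suc l" ?x] by (simp add: Suc_diff_Suc)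
  ultimately show "\<exists>c. \<forall>z\<in>set ps. suffix (c # drop (length ?x - l) ?x) z"
    by auto
qed

lemma d1_eq_card_common_suffix_length:
  assumes l: "l \<le> length x"
  shows "d1 x y l = card {P. is_path 1 x y P \<and> common_suffix_length P = l}"
proof -
  let ?u = "drop (length x - l) x"
  have "(\<forall>z\<in>set P. \<exists>q. z = q @ ?u) \<and> \<not> (\<exists>c. \<forall>z\<in>set P. \<exists>q. z = q @ [c] @ ?u)
      \<longleftrightarrow> common_suffix_length P = l"
    if P: "is_path 1 x y P" for P
  proof -
    have ne: "P \<noteq> []" and last: "last P = x"
      using P by (simp_all add: is_path_iff)
    show ?thesis
      using suffix_all_drop_iff_le_common_suffix_length[OF ne, of l]
        ex_suffix_Cons_all_iff_le_common_suffix_length[OF ne, of l] l last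
      by (auto simp: suffix_def)
  qed
  then have "{P. is_path 1 x y P \<and> (\<forall>z\<in>set P. \<exists>q. z = q @ ?u)
        \<and> \<not> (\<exists>c. \<forall>z\<in>set P. \<exists>q. z = q @ [c] @ ?u)}
      = {P. is_path 1 x y P \<and> common_suffix_length P = l}"
    by blast
  then show ?thesis by (simp add: d1_def)
qed

lemma sum_if_le_eq_sum_card_fibres:
  fixes f :: "'a \<Rightarrow> nat" and g :: "nat \<Rightarrow> nat"
  assumes "finite S"
  shows "(\<Sum>x\<in>S. if f x \<le> n then g (f x) else 0) = (\<Sum>l = 0..n. card {x \<in> S. f x = l} * g l)"
proof -
  have "(\<Sum>x\<in>S. if f x \<le> n then g (f x) else 0) = (\<Sum>x \<in> {x \<in> S. f x \<le> n}. g (f x))"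
    using assms by (simp add: sum.inter_filter)
  also have "\<dots> = (\<Sum>l = 0..n. \<Sum>x \<in> {x \<in> {x \<in> S. f x \<le> n}. f x = l}. g (f x))"
    using assms by (intro sum.group[symmetric]) auto
  also have "\<dots> = (\<Sum>l = 0..n. \<Sum>x \<in> {x \<in> S. f x = l}. g l)"
    by (rule sum.cong[OF refl], rule sum.cong) auto
  finally show ?thesis by simp
qed

theorem mainTheorem6:
  fixes r :: nat and w v :: word
  assumes "1 \<le> r" and "w \<in> YF r" and "v \<in> YF r"
  shows "d r w v = (\<Sum>l = 0..h w v. d1 (s w) (s v) l * r ^ (length v - length w - e (cut v l)))"
proof -
  have "d r w v = (\<Sum>P | is_path 1 (s w) (s v) P. card (lifts r w v P))"
    unfolding d_def by (rule card_paths_eq_sum_card_lifts)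
  also have "\<dots> = (\<Sum>P | is_path 1 (s w) (s v) P. lift_count r w v (common_suffix_length P))"
    using card_lifts assms(2) by (intro sum.cong) auto
  also have "\<dots> = (\<Sum>l = 0..h w v. card {P \<in> {P. is_path 1 (s w) (s v) P}. common_suffix_length P = l}
      * r ^ (length v - length w - e (cut v l)))"
    unfolding lift_count_def by (rule sum_if_le_eq_sum_card_fibres[OF finite_paths])
  also have "\<dots> = (\<Sum>l = 0..h w v. d1 (s w) (s v) l * r ^ (length v - length w - e (cut v l)))"
    using h_le_length(1)[of w v] by (intro sum.cong refl) (simp add: d1_eq_card_common_suffix_length)
  finally show ?thesis .
qed

end
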